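(* Let $W$ be a channel with finite input alphabet $\mathcal X$ and finite output alphabet $\mathcal Y$, let $P$ be an input distribution with $I(P,W)=C_W$ and $V_{P,W}>0$, and let $R_2<0$. Then \[ \lim_{n\to\infty}\ n\min_{0\le s\le1}\Big(C_Ws+\frac{R_2}{\sqrt n}s+\psi_P(s)\Big)=-\frac{R_2^2}{2V_{P,W}}. \]
   Context: Logs natural. $W_P=\sum_xP(x)W_x$, $D$ is relative entropy, $I(P,W)=\sum_xP(x)D(W_x\|W_P)$, $C_W=\max_PI(P,W)$, $V_{P,W}=\sum_xP(x)\sum_yW_x(y)\big(\log\frac{W_x(y)}{W_P(y)}-D(W_x\|W_P)\big)^2$, and the Gallager function is $\psi_P(s)=\log\sum_y\big(\sum_xP(x)W_x(y)^{1/(1+s)}\big)^{1+s}$ for $s\ge0$. *)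

theory Defs
  imports "HOL-Analysis.Analysis"
begin

definition channel :: "('x::finite \<Rightarrow> 'y::finite \<Rightarrow> real) \<Rightarrow> bool" where
  "channel W \<longleftrightarrow> (\<forall>x y. 0 \<le> W x y) \<and> (\<forall>x. (\<Sum>y\<in>UNIV. W x y) = 1)"

definition input_distr :: "('x::finite \<Rightarrow> real) \<Rightarrow> bool" where
  "input_distr P \<longleftrightarrow> (\<forall>x. 0 \<le> P x) \<and> (\<Sum>x\<in>UNIV. P x) = 1"

definition outdist :: "('x::finite \<Rightarrow> real) \<Rightarrow> ('x \<Rightarrow> 'y \<Rightarrow> real) \<Rightarrow> 'y \<Rightarrow> real" where
  "outdist P W y = (\<Sum>x\<in>UNIV. P x * W x y)"

definition relent :: "('y::finite \<Rightarrow> real) \<Rightarrow> ('y \<Rightarrow> real) \<Rightarrow> real" where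
  "relent p q = (\<Sum>y\<in>{y. 0 < p y}. p y * ln (p y / q y))"

definition mutinf :: "('x::finite \<Rightarrow> real) \<Rightarrow> ('x \<Rightarrow> 'y::finite \<Rightarrow> real) \<Rightarrow> real" where
  "mutinf P W = (\<Sum>x\<in>UNIV. P x * relent (W x) (outdist P W))"

definition capacity :: "('x::finite \<Rightarrow> 'y::finite \<Rightarrow> real) \<Rightarrow> real" where
  "capacity W = Sup {mutinf P W | P. input_distr P}"

definition dispersion :: "('x::finite \<Rightarrow> real) \<Rightarrow> ('x \<Rightarrow> 'y::finite \<Rightarrow> real) \<Rightarrow> real" where
  "dispersion P W = (\<Sum>x\<in>UNIV. P x * (\<Sum>y\<in>{y. 0 < W x y}.
      W x y * (ln (W x y / outdist P W y) - relent (W x) (outdist P W))\<^sup>2))"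

definition gallager :: "('x::finite \<Rightarrow> real) \<Rightarrow> ('x \<Rightarrow> 'y::finite \<Rightarrow> real) \<Rightarrow> real \<Rightarrow> real" where
  "gallager P W s = ln (\<Sum>y\<in>UNIV. (\<Sum>x\<in>UNIV. P x * W x y powr (1 / (1 + s))) powr (1 + s))"

end

theory Submission
  imports Defs
begin

(* The theorem is a second-order Taylor statement about the Gallager function
   psi = psi_P at s = 0.  For s > -1 we write
     psi(s) = ln (SUM_y exp ((1+s) * ln (SUM_x P x * W x y powr (1/(1+s))))),
   a log-sum-exp of log-sum-exps.  The derivative of ln (SUM_i c_i exp (k_i s)) is
   the exp-tilted mean of k_i', and its second derivative is the tilted mean of
   k_i'' plus the tilted variance of k_i'; hence psi is twice differentiable with
   psi'' >= 0 (convexity), psi(0) = 0, psi'(0) = -I(P,W) and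
   psi''(0) = E[i^2] - I(P,W)^2 for the information density i.  For a
   capacity-achieving P the Karush-Kuhn-Tucker conditions give D(W_x || W_P) = C_W
   whenever P(x) > 0, so psi'(0) = -C_W and psi''(0) = V_{P,W}. *)

subsection \<open>Exponentially tilted sums\<close>

text \<open>For weights c and exponents k on a finite index set A:
  expsum is the sum of c i * exp (k i), tilted_mean the average of v under the
  tilted weights c i * exp (k i), and tilted_curv is the tilted mean of w plus the
  tilted variance of v; it is the derivative of the tilted mean when v = k' and w = v'.\<close>

definition expsum :: "'i set \<Rightarrow> ('i \<Rightarrow> real) \<Rightarrow> ('i \<Rightarrow> real) \<Rightarrow> real" where
  "expsum A c k = (\<Sum>i\<in>A. c i * exp (k i))"

definition tilted_mean :: "'i set \<Rightarrow> ('i \<Rightarrow> real) \<Rightarrow> ('i \<Rightarrow> real) \<Rightarrow> ('i \<Rightarrow> real) \<Rightarrow> real" where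
  "tilted_mean A c k v = (\<Sum>i\<in>A. c i * exp (k i) * v i) / expsum A c k"

definition tilted_curv ::
    "'i set \<Rightarrow> ('i \<Rightarrow> real) \<Rightarrow> ('i \<Rightarrow> real) \<Rightarrow> ('i \<Rightarrow> real) \<Rightarrow> ('i \<Rightarrow> real) \<Rightarrow> real" where
  "tilted_curv A c k v w =
     (\<Sum>i\<in>A. c i * exp (k i) * (w i + (v i)\<^sup>2)) / expsum A c k - (tilted_mean A c k v)\<^sup>2"

lemma expsum_pos:
  assumes "finite A" "A \<noteq> {}" "\<And>i. i \<in> A \<Longrightarrow> 0 < c i"
  shows "0 < expsum A c k"
  unfolding expsum_def using assms by (intro sum_pos) auto

lemma DERIV_ln_expsum:
  fixes k :: "'i \<Rightarrow> real \<Rightarrow> real"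
  assumes A: "finite A" "A \<noteq> {}" and c: "\<And>i. i \<in> A \<Longrightarrow> 0 < c i"
    and dk: "\<And>i. i \<in> A \<Longrightarrow> (k i has_real_derivative k1 i) (at s)"
  shows "((\<lambda>s. ln (expsum A c (\<lambda>i. k i s))) has_real_derivative tilted_mean A c (\<lambda>i. k i s) k1) (at s)"
proof -
  have dS: "((\<lambda>s. expsum A c (\<lambda>i. k i s)) has_real_derivative (\<Sum>i\<in>A. c i * exp (k i s) * k1 i)) (at s)"
    unfolding expsum_def by (rule DERIV_sum) (auto intro!: derivative_eq_intros dk)
  have "0 < expsum A c (\<lambda>i. k i s)" using expsum_pos[OF A c] .
  from DERIV_chain2[OF DERIV_ln_divide[OF this] dS] show ?thesis
    unfolding tilted_mean_def by simp
qed

lemma DERIV_tilted_mean: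
  fixes k k1 :: "'i \<Rightarrow> real \<Rightarrow> real"
  assumes A: "finite A" "A \<noteq> {}" and c: "\<And>i. i \<in> A \<Longrightarrow> 0 < c i"
    and dk: "\<And>i. i \<in> A \<Longrightarrow> (k i has_real_derivative k1 i s) (at s)"
    and dk1: "\<And>i. i \<in> A \<Longrightarrow> (k1 i has_real_derivative k2 i) (at s)"
  shows "((\<lambda>s. tilted_mean A c (\<lambda>i. k i s) (\<lambda>i. k1 i s)) has_real_derivative
           tilted_curv A c (\<lambda>i. k i s) (\<lambda>i. k1 i s) k2) (at s)"
proof -
  define S where "S = expsum A c (\<lambda>i. k i s)"
  define N where "N = (\<Sum>i\<in>A. c i * exp (k i s) * k1 i s)"
  define N' where "N' = (\<Sum>i\<in>A. c i * exp (k i s) * (k2 i + (k1 i s)\<^sup>2))"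
  have dS: "((\<lambda>s. expsum A c (\<lambda>i. k i s)) has_real_derivative N) (at s)"
    unfolding expsum_def N_def by (rule DERIV_sum) (auto intro!: derivative_eq_intros dk)
  have dN: "((\<lambda>s. \<Sum>i\<in>A. c i * exp (k i s) * k1 i s) has_real_derivative N') (at s)"
    unfolding N'_def
    by (rule DERIV_sum) (auto intro!: derivative_eq_intros dk dk1 simp: power2_eq_square algebra_simps)
  have S: "0 < S" unfolding S_def using expsum_pos[OF A c] .
  have "(N' * S - N * N) / (S * S) = tilted_curv A c (\<lambda>i. k i s) (\<lambda>i. k1 i s) k2"
    unfolding tilted_curv_def tilted_mean_def N_def[symmetric] N'_def[symmetric] S_def[symmetric]
    using S by (simp add: field_simps power2_eq_square)
  with DERIV_divide[OF dN dS] S show ?thesis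
    unfolding tilted_mean_def S_def N_def[symmetric] by simp
qed

lemma tilted_curv_nonneg:
  assumes A: "finite A" "A \<noteq> {}" and c: "\<And>i. i \<in> A \<Longrightarrow> 0 < c i"
    and w: "\<And>i. i \<in> A \<Longrightarrow> 0 \<le> w i"
  shows "0 \<le> tilted_curv A c k v w"
proof -
  define S where "S = expsum A c k"
  define m where "m = tilted_mean A c k v"
  define E2 where "E2 = (\<Sum>i\<in>A. c i * exp (k i) * (v i)\<^sup>2)"
  have S: "0 < S" unfolding S_def using expsum_pos[OF A c] .
  have Sdef: "S = (\<Sum>i\<in>A. c i * exp (k i))" unfolding S_def expsum_def ..
  have N: "(\<Sum>i\<in>A. c i * exp (k i) * v i) = m * S"
    unfolding m_def tilted_mean_def S_def[symmetric] using S by simp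
  have "0 \<le> (\<Sum>i\<in>A. c i * exp (k i) * (v i - m)\<^sup>2)"
    using c by (intro sum_nonneg mult_nonneg_nonneg) (auto intro: less_imp_le)
  also have "\<dots> = E2 - 2 * m * (\<Sum>i\<in>A. c i * exp (k i) * v i) + m\<^sup>2 * S"
    unfolding E2_def Sdef
    by (simp add: power2_eq_square algebra_simps sum.distrib sum_subtractf sum_distrib_left)
  also have "\<dots> = E2 - m\<^sup>2 * S"
    using N by (simp add: power2_eq_square)
  finally have variance: "m\<^sup>2 * S \<le> E2" by simp
  have "E2 \<le> (\<Sum>i\<in>A. c i * exp (k i) * (w i + (v i)\<^sup>2))"
    unfolding E2_def using c w by (intro sum_mono) (auto intro!: mult_left_mono less_imp_le)
  with variance S have "m\<^sup>2 \<le> (\<Sum>i\<in>A. c i * exp (k i) * (w i + (v i)\<^sup>2)) / S"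
    by (simp add: le_divide_eq)
  then show ?thesis unfolding tilted_curv_def m_def S_def by simp
qed

subsection \<open>An analytic limit theorem\<close>

lemma linear_bounds_near_zero:
  fixes g :: "real \<Rightarrow> real"
  assumes g0: "g 0 = 0" and dg: "(g has_real_derivative U) (at 0)" and eta: "0 < \<eta>"
  obtains \<epsilon> where "0 < \<epsilon>" "\<epsilon> \<le> 1/2"
    "\<And>t. 0 \<le> t \<Longrightarrow> t \<le> \<epsilon> \<Longrightarrow> (U - \<eta>) * t \<le> g t \<and> g t \<le> (U + \<eta>) * t"
proof -
  have "((\<lambda>t. (g t - g 0) / (t - 0)) \<longlongrightarrow> U) (at 0)"
    using dg by (simp add: has_field_derivative_iff)
  then have "\<forall>\<^sub>F t in at 0. dist ((g t - g 0) / (t - 0)) U < \<eta>"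
    using eta by (simp add: tendsto_iff)
  then obtain d where d: "0 < d"
    and quot: "\<And>t. t \<noteq> 0 \<Longrightarrow> dist t 0 < d \<Longrightarrow> dist ((g t - g 0) / (t - 0)) U < \<eta>"
    unfolding eventually_at by blast
  define \<epsilon> where "\<epsilon> = min (d/2) (1/2)"
  have "(U - \<eta>) * t \<le> g t \<and> g t \<le> (U + \<eta>) * t" if t: "0 \<le> t" "t \<le> \<epsilon>" for t
  proof (cases "t = 0")
    case True
    then show ?thesis using g0 by simp
  next
    case False
    then have "\<bar>g t / t - U\<bar> < \<eta>"
      using quot[of t] t d g0 by (simp add: dist_real_def \<epsilon>_def)
    moreover have "0 < t" using t False by simp
    ultimately show ?thesis by (simp add: abs_less_iff field_simps)
  qed
  moreover have "0 < \<epsilon>" "\<epsilon> \<le> 1/2" using d by (auto simp: \<epsilon>_def)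
  ultimately show ?thesis using that by blast
qed

lemma quadratic_bounds_near_zero:
  fixes f f1 f2 :: "real \<Rightarrow> real"
  assumes f0: "f 0 = 0" and f10: "f1 0 = 0"
    and df: "\<And>s. 0 \<le> s \<Longrightarrow> (f has_real_derivative f1 s) (at s)"
    and df1: "\<And>s. 0 \<le> s \<Longrightarrow> (f1 has_real_derivative f2 s) (at s)"
    and f2_nonneg: "\<And>s. 0 \<le> s \<Longrightarrow> 0 \<le> f2 s" and f20: "f2 0 = U"
    and eta: "0 < \<eta>" "\<eta> < U"
  obtains \<epsilon> where "0 < \<epsilon>" "\<epsilon> \<le> 1/2"
    "\<And>s. 0 \<le> s \<Longrightarrow> s \<le> \<epsilon> \<Longrightarrow> (U - \<eta>) * s\<^sup>2 / 2 \<le> f s \<and> f s \<le> (U + \<eta>) * s\<^sup>2 / 2"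
    "\<And>s. \<epsilon> \<le> s \<Longrightarrow> (U - \<eta>) * \<epsilon>\<^sup>2 / 2 \<le> f s"
proof -
  have "(f1 has_real_derivative U) (at 0)" using df1[of 0] f20 by simp
  then obtain \<epsilon> where \<epsilon>: "0 < \<epsilon>" "\<epsilon> \<le> 1/2"
    and f1_bounds: "\<And>t. 0 \<le> t \<Longrightarrow> t \<le> \<epsilon> \<Longrightarrow> (U - \<eta>) * t \<le> f1 t \<and> f1 t \<le> (U + \<eta>) * t"
    using linear_bounds_near_zero[of f1 U \<eta>, OF f10 _ eta(1)] by blast
  have lower: "(U - \<eta>) * s\<^sup>2 / 2 \<le> f s" if s: "0 \<le> s" "s \<le> \<epsilon>" for s
  proof -
    have "(\<lambda>t. f t - (U - \<eta>) * t\<^sup>2 / 2) 0 \<le> (\<lambda>t. f t - (U - \<eta>) * t\<^sup>2 / 2) s"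
    proof (rule DERIV_nonneg_imp_nondecreasing[OF s(1)], intro exI conjI)
      fix x assume x: "0 \<le> x" "x \<le> s"
      show "((\<lambda>t. f t - (U - \<eta>) * t\<^sup>2 / 2) has_real_derivative f1 x - (U - \<eta>) * x) (at x)"
        using df[OF x(1)] by (auto intro!: derivative_eq_intros)
      show "0 \<le> f1 x - (U - \<eta>) * x" using f1_bounds[of x] x s by auto
    qed
    then show ?thesis using f0 by simp
  qed
  have upper: "f s \<le> (U + \<eta>) * s\<^sup>2 / 2" if s: "0 \<le> s" "s \<le> \<epsilon>" for s
  proof -
    have "(\<lambda>t. (U + \<eta>) * t\<^sup>2 / 2 - f t) 0 \<le> (\<lambda>t. (U + \<eta>) * t\<^sup>2 / 2 - f t) s"
    proof (rule DERIV_nonneg_imp_nondecreasing[OF s(1)], intro exI conjI)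
      fix x assume x: "0 \<le> x" "x \<le> s"
      show "((\<lambda>t. (U + \<eta>) * t\<^sup>2 / 2 - f t) has_real_derivative (U + \<eta>) * x - f1 x) (at x)"
        using df[OF x(1)] by (auto intro!: derivative_eq_intros)
      show "0 \<le> (U + \<eta>) * x - f1 x" using f1_bounds[of x] x s by auto
    qed
    then show ?thesis using f0 by simp
  qed
  have f1_far: "0 \<le> f1 t" if "\<epsilon> \<le> t" for t
  proof -
    have "f1 \<epsilon> \<le> f1 t"
    proof (rule DERIV_nonneg_imp_nondecreasing[OF that], intro exI conjI)
      fix x assume "\<epsilon> \<le> x"
      then have "0 \<le> x" using \<epsilon> by simp
      then show "(f1 has_real_derivative f2 x) (at x)" "0 \<le> f2 x" using df1 f2_nonneg by auto
    qed
    moreover have "0 \<le> f1 \<epsilon>" using f1_bounds[of \<epsilon>] \<epsilon> eta mult_pos_pos[of "U - \<eta>" \<epsilon>] by linarith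
    ultimately show ?thesis by simp
  qed
  have far: "(U - \<eta>) * \<epsilon>\<^sup>2 / 2 \<le> f s" if "\<epsilon> \<le> s" for s
  proof -
    have "f \<epsilon> \<le> f s"
    proof (rule DERIV_nonneg_imp_nondecreasing[OF that], intro exI conjI)
      fix x assume x: "\<epsilon> \<le> x"
      then have "0 \<le> x" using \<epsilon> by simp
      then show "(f has_real_derivative f1 x) (at x)" "0 \<le> f1 x" using df f1_far[OF x] by auto
    qed
    then show ?thesis using lower[of \<epsilon>] \<epsilon> by simp
  qed
  show ?thesis using that \<epsilon> lower upper far by blast
qed

text \<open>The elementary optimisation step: if a s^2/2 <= f s <= b s^2/2 near 0 and f stays
  large away from 0, then the minimum of f s + r s over [0,1] for a small negative slope r
  lies between -r^2/(2a) and -r^2/(2b) (the minima of the two tilted parabolas).\<close>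

lemma inf_tilt_bounds:
  fixes f :: "real \<Rightarrow> real"
  assumes a: "0 < a" and b: "0 < b" and \<epsilon>: "0 < \<epsilon>" "\<epsilon> \<le> 1"
    and near: "\<And>s. 0 \<le> s \<Longrightarrow> s \<le> \<epsilon> \<Longrightarrow> a * s\<^sup>2 / 2 \<le> f s \<and> f s \<le> b * s\<^sup>2 / 2"
    and far: "\<And>s. \<epsilon> \<le> s \<Longrightarrow> a * \<epsilon>\<^sup>2 / 2 \<le> f s"
    and r: "r < 0" "- r \<le> a * \<epsilon>\<^sup>2 / 2" "- r \<le> b * \<epsilon>"
  shows "- (r\<^sup>2 / (2 * a)) \<le> (INF s\<in>{0..1}. f s + r * s)"
    and "(INF s\<in>{0..1}. f s + r * s) \<le> - (r\<^sup>2 / (2 * b))"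
proof -
  have lower: "- (r\<^sup>2 / (2 * a)) \<le> f s + r * s" if s: "0 \<le> s" "s \<le> 1" for s
  proof (cases "s \<le> \<epsilon>")
    case True
    have "0 \<le> (a * s + r)\<^sup>2 / (2 * a)" using a by simp
    also have "\<dots> = a * s\<^sup>2 / 2 + r * s + r\<^sup>2 / (2 * a)"
      using a by (simp add: field_simps power2_eq_square)
    finally show ?thesis using near[OF s(1) True] by simp
  next
    case False
    have "r \<le> r * s" using r(1) s by (simp add: mult_le_cancel_left1)
    then have "0 \<le> f s + r * s" using far[of s] False r(2) by simp
    moreover have "0 \<le> r\<^sup>2 / (2 * a)" using a by simp
    ultimately show ?thesis by linarith
  qed
  then show "- (r\<^sup>2 / (2 * a)) \<le> (INF s\<in>{0..1}. f s + r * s)"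
    by (intro cINF_greatest) auto
  have bdd: "bdd_below ((\<lambda>s. f s + r * s) ` {0..1})"
    using lower by (intro bdd_belowI2) auto
  define s0 where "s0 = - r / b"
  have s0: "0 \<le> s0" "s0 \<le> \<epsilon>"
    using r b pos_divide_le_eq[OF b, of "- r" \<epsilon>] divide_nonpos_pos[of r b]
    unfolding s0_def by (auto simp: mult.commute)
  have "(INF s\<in>{0..1}. f s + r * s) \<le> f s0 + r * s0"
    by (rule cINF_lower[OF bdd]) (use s0 \<epsilon> in auto)
  also have "\<dots> \<le> b * s0\<^sup>2 / 2 + r * s0" using near[OF s0] by simp
  also have "\<dots> = - (r\<^sup>2 / (2 * b))"
    unfolding s0_def using b by (simp add: field_simps power2_eq_square)
  finally show "(INF s\<in>{0..1}. f s + r * s) \<le> - (r\<^sup>2 / (2 * b))" .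
qed

lemma scaled_inf_eventually_bounds:
  fixes f f1 f2 :: "real \<Rightarrow> real"
  assumes f0: "f 0 = 0" and f10: "f1 0 = 0"
    and df: "\<And>s. 0 \<le> s \<Longrightarrow> (f has_real_derivative f1 s) (at s)"
    and df1: "\<And>s. 0 \<le> s \<Longrightarrow> (f1 has_real_derivative f2 s) (at s)"
    and f2_nonneg: "\<And>s. 0 \<le> s \<Longrightarrow> 0 \<le> f2 s" and f20: "f2 0 = U"
    and R: "R < 0" and eta: "0 < \<eta>" "\<eta> < U"
  shows "\<forall>\<^sub>F n in sequentially.
     - (R\<^sup>2 / (2 * (U - \<eta>))) \<le> real n * (INF s\<in>{0..1}. f s + R / sqrt (real n) * s) \<and>
     real n * (INF s\<in>{0..1}. f s + R / sqrt (real n) * s) \<le> - (R\<^sup>2 / (2 * (U + \<eta>)))"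
proof -
  obtain \<epsilon> where \<epsilon>: "0 < \<epsilon>" "\<epsilon> \<le> 1/2"
    and near: "\<And>s. 0 \<le> s \<Longrightarrow> s \<le> \<epsilon> \<Longrightarrow> (U - \<eta>) * s\<^sup>2 / 2 \<le> f s \<and> f s \<le> (U + \<eta>) * s\<^sup>2 / 2"
    and far: "\<And>s. \<epsilon> \<le> s \<Longrightarrow> (U - \<eta>) * \<epsilon>\<^sup>2 / 2 \<le> f s"
    using quadratic_bounds_near_zero[OF f0 f10 df df1 f2_nonneg f20 eta] by blast
  define m where "m = min ((U - \<eta>) * \<epsilon>\<^sup>2 / 2) ((U + \<eta>) * \<epsilon>)"
  have m: "0 < m" using \<epsilon> eta unfolding m_def by simp
  have "(\<lambda>n. R / sqrt (real n)) \<longlonglongrightarrow> 0"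
    by (intro tendsto_divide_0[OF tendsto_const] filterlim_at_top_imp_at_infinity
          filterlim_compose[OF sqrt_at_top filterlim_real_sequentially])
  then have "\<forall>\<^sub>F n in sequentially. - m < R / sqrt (real n)"
    using m by (intro order_tendstoD(1)) auto
  moreover have "\<forall>\<^sub>F n in sequentially. 1 \<le> n" by (rule eventually_ge_at_top)
  ultimately show ?thesis
  proof eventually_elim
    case (elim n)
    define r where "r = R / sqrt (real n)"
    have n: "0 < real n" using elim by simp
    have r: "r < 0" "- r \<le> (U - \<eta>) * \<epsilon>\<^sup>2 / 2" "- r \<le> (U + \<eta>) * \<epsilon>"
      using elim R n unfolding r_def m_def by (auto simp: divide_neg_pos)
    have scale: "real n * r\<^sup>2 = R\<^sup>2"
      unfolding r_def using n by (simp add: power_divide)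
    have ab: "0 < U - \<eta>" "0 < U + \<eta>" and \<epsilon>1: "\<epsilon> \<le> 1" using eta \<epsilon> by auto
    note bounds = inf_tilt_bounds[OF ab \<epsilon>(1) \<epsilon>1 near far r]
    have "- (R\<^sup>2 / (2 * (U - \<eta>))) \<le> real n * (INF s\<in>{0..1}. f s + r * s)"
      using mult_left_mono[OF bounds(1), of "real n"] by (simp add: scale)
    moreover have "real n * (INF s\<in>{0..1}. f s + r * s) \<le> - (R\<^sup>2 / (2 * (U + \<eta>)))"
      using mult_left_mono[OF bounds(2), of "real n"] by (simp add: scale)
    ultimately show ?case unfolding r_def by simp
  qed
qed

text \<open>Letting eta tend to 0 gives the limit -R^2/(2U).\<close>

lemma scaled_inf_limit:
  fixes f f1 f2 :: "real \<Rightarrow> real"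
  assumes f0: "f 0 = 0" and f10: "f1 0 = 0"
    and df: "\<And>s. 0 \<le> s \<Longrightarrow> (f has_real_derivative f1 s) (at s)"
    and df1: "\<And>s. 0 \<le> s \<Longrightarrow> (f1 has_real_derivative f2 s) (at s)"
    and f2_nonneg: "\<And>s. 0 \<le> s \<Longrightarrow> 0 \<le> f2 s" and f20: "f2 0 = U"
    and U: "0 < U" and R: "R < 0"
  shows "(\<lambda>n. real n * (INF s\<in>{0..1}. f s + R / sqrt (real n) * s)) \<longlonglongrightarrow> - (R\<^sup>2 / (2 * U))"
proof (rule tendstoI)
  fix e :: real assume e: "0 < e"
  define L where "L u = - (R\<^sup>2 / (2 * u))" for u :: real
  have "((\<lambda>\<eta>. L (U - \<eta>)) \<longlongrightarrow> L U) (at_right 0)" "((\<lambda>\<eta>. L (U + \<eta>)) \<longlongrightarrow> L U) (at_right 0)"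
    unfolding L_def using U by (auto intro!: tendsto_eq_intros)
  then have "\<forall>\<^sub>F \<eta> in at_right 0. dist (L (U - \<eta>)) (L U) < e \<and> dist (L (U + \<eta>)) (L U) < e
      \<and> 0 < \<eta> \<and> \<eta> < U"
    using e U by (intro eventually_conj eventually_at_right_less)
      (auto simp: tendsto_iff eventually_at_right_field intro: exI[of _ U])
  then obtain \<eta> where \<eta>: "dist (L (U - \<eta>)) (L U) < e" "dist (L (U + \<eta>)) (L U) < e" "0 < \<eta>" "\<eta> < U"
    using eventually_happens[of _ "at_right (0::real)"] by auto
  show "\<forall>\<^sub>F n in sequentially.
      dist (real n * (INF s\<in>{0..1}. f s + R / sqrt (real n) * s)) (- (R\<^sup>2 / (2 * U))) < e"
    using scaled_inf_eventually_bounds[OF f0 f10 df df1 f2_nonneg f20 R \<eta>(3,4)]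
    by (rule eventually_mono) (use \<eta>(1,2) in \<open>auto simp: L_def dist_real_def abs_less_iff\<close>)
qed

locale dmc =
  fixes W :: "'x::finite \<Rightarrow> 'y::finite \<Rightarrow> real"
  assumes is_channel: "channel W"
begin

lemma W_nonneg: "0 \<le> W x y"
  using is_channel unfolding channel_def by auto

lemma W_sum: "(\<Sum>y\<in>UNIV. W x y) = 1"
  using is_channel unfolding channel_def by auto

lemma sum_over_W_support: "(\<Sum>y\<in>{y. 0 < W x y}. W x y * F y) = (\<Sum>y\<in>UNIV. W x y * F y)"
proof (rule sum.mono_neutral_left)
  show "\<forall>y\<in>UNIV - {y. 0 < W x y}. W x y * F y = 0"
    using W_nonneg[of x] by (auto simp: order_less_le)
qed auto

definition negent :: "'x \<Rightarrow> real" where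
  "negent x = (\<Sum>y\<in>{y. 0 < W x y}. W x y * ln (W x y))"

lemma joint_le_outdist:
  assumes "\<And>x. 0 \<le> Q x"
  shows "Q x * W x y \<le> outdist Q W y"
  unfolding outdist_def by (rule member_le_sum) (auto intro: mult_nonneg_nonneg assms W_nonneg)

lemma mutinf_entropy_form:
  fixes Q :: "'x \<Rightarrow> real"
  assumes Q: "\<And>x. 0 \<le> Q x"
  shows "mutinf Q W = (\<Sum>x\<in>UNIV. Q x * negent x) - (\<Sum>y\<in>UNIV. outdist Q W y * ln (outdist Q W y))"
proof -
  define WQ where "WQ = outdist Q W"
  have row: "Q x * relent (W x) WQ = Q x * negent x - Q x * (\<Sum>y\<in>UNIV. W x y * ln (WQ y))" for x
  proof (cases "0 < Q x")
    case True
    have "relent (W x) WQ = (\<Sum>y\<in>{y. 0 < W x y}. W x y * (ln (W x y) - ln (WQ y)))"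
      unfolding relent_def
    proof (rule sum.cong)
      fix y assume "y \<in> {y. 0 < W x y}"
      then have w: "0 < W x y" by simp
      then have "0 < WQ y"
        using mult_pos_pos[OF True w] joint_le_outdist[of Q x y, OF Q] unfolding WQ_def by linarith
      then show "W x y * ln (W x y / WQ y) = W x y * (ln (W x y) - ln (WQ y))"
        using w by (simp add: ln_div)
    qed simp
    also have "\<dots> = negent x - (\<Sum>y\<in>UNIV. W x y * ln (WQ y))"
      unfolding negent_def sum_over_W_support[symmetric] by (simp add: algebra_simps sum_subtractf)
    finally show ?thesis by (simp add: right_diff_distrib)
  next
    case False
    then show ?thesis using Q[of x] by simp
  qed
  have "(\<Sum>x\<in>UNIV. Q x * (\<Sum>y\<in>UNIV. W x y * ln (WQ y))) = (\<Sum>y\<in>UNIV. \<Sum>x\<in>UNIV. Q x * W x y * ln (WQ y))"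
    by (subst sum.swap) (simp add: sum_distrib_left mult.assoc)
  also have "\<dots> = (\<Sum>y\<in>UNIV. WQ y * ln (WQ y))"
    unfolding WQ_def outdist_def by (simp add: sum_distrib_right)
  finally show ?thesis
    unfolding mutinf_def WQ_def[symmetric] using row by (simp add: sum_subtractf)
qed

text \<open>Mutual information is bounded (crudely, using ln t <= t), so the supremum
  defining the capacity is attained as an upper bound.\<close>

lemma mutinf_le_card:
  fixes Q :: "'x \<Rightarrow> real"
  assumes "input_distr Q"
  shows "mutinf Q W \<le> real CARD('x)"
proof -
  have Q: "0 \<le> Q x" for x using assms unfolding input_distr_def by auto
  define WQ where "WQ = outdist Q W"
  have "Q x * relent (W x) WQ \<le> 1" for x
  proof (cases "0 < Q x")
    case True
    have "relent (W x) WQ \<le> (\<Sum>y\<in>{y. 0 < W x y}. W x y * (1 / Q x))"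
      unfolding relent_def
    proof (rule sum_mono)
      fix y assume "y \<in> {y. 0 < W x y}"
      then have w: "0 < W x y" by simp
      have le: "Q x * W x y \<le> WQ y" using joint_le_outdist[OF Q] unfolding WQ_def .
      then have pos: "0 < WQ y" using mult_pos_pos[OF True w] by linarith
      have "ln (W x y / WQ y) \<le> W x y / WQ y" using w pos by (intro ln_le_minus_one[THEN order_trans]) auto
      also have "\<dots> \<le> 1 / Q x" using le True pos w by (simp add: field_simps)
      finally show "W x y * ln (W x y / WQ y) \<le> W x y * (1 / Q x)" using w by (intro mult_left_mono) auto
    qed
    also have "\<dots> = 1 / Q x"
      using sum_over_W_support[of x "\<lambda>_. 1 / Q x"] W_sum by (simp add: sum_divide_distrib[symmetric])
    finally show ?thesis using True by (simp add: field_simps)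
  next
    case False
    then show ?thesis using Q[of x] by simp
  qed
  then have "mutinf Q W \<le> (\<Sum>x::'x\<in>UNIV. 1)"
    unfolding mutinf_def WQ_def[symmetric] by (intro sum_mono)
  then show ?thesis by simp
qed

lemma mutinf_le_capacity: "input_distr Q \<Longrightarrow> mutinf Q W \<le> capacity W"
  unfolding capacity_def
  by (rule cSup_upper) (auto intro!: bdd_aboveI[where M="real CARD('x)"] mutinf_le_card)

end

locale dmc_input = dmc W for W :: "'x::finite \<Rightarrow> 'y::finite \<Rightarrow> real" +
  fixes P :: "'x \<Rightarrow> real"
  assumes is_input: "input_distr P"
begin

abbreviation WP :: "'y \<Rightarrow> real" where "WP \<equiv> outdist P W"

definition senders :: "'y \<Rightarrow> 'x set" where
  "senders y = {x. 0 < P x \<and> 0 < W x y}"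

definition outputs :: "'y set" where
  "outputs = {y. 0 < WP y}"

lemma P_nonneg: "0 \<le> P x"
  using is_input unfolding input_distr_def by auto

lemma P_sum: "(\<Sum>x\<in>UNIV. P x) = 1"
  using is_input unfolding input_distr_def by auto

lemma P_senders: "x \<in> senders y \<Longrightarrow> 0 < P x"
  and W_senders: "x \<in> senders y \<Longrightarrow> 0 < W x y"
  unfolding senders_def by auto

lemma joint_outside_senders: "x \<notin> senders y \<Longrightarrow> P x * W x y = 0"
  using P_nonneg[of x] W_nonneg[of x y] unfolding senders_def by (auto simp: order_less_le)

lemma WP_nonneg: "0 \<le> WP y"
  unfolding outdist_def by (intro sum_nonneg mult_nonneg_nonneg P_nonneg W_nonneg)

lemma WP_sum: "(\<Sum>y\<in>UNIV. WP y) = 1"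
proof -
  have "(\<Sum>y\<in>UNIV. WP y) = (\<Sum>x\<in>UNIV. \<Sum>y\<in>UNIV. P x * W x y)"
    unfolding outdist_def by (rule sum.swap)
  also have "\<dots> = 1" by (simp add: sum_distrib_left[symmetric] W_sum P_sum)
  finally show ?thesis .
qed

lemma WP_senders: "WP y = (\<Sum>x\<in>senders y. P x * W x y)"
  unfolding outdist_def
  by (rule sum.mono_neutral_right) (auto simp: joint_outside_senders)

lemma WP_pos: "y \<in> outputs \<Longrightarrow> 0 < WP y"
  unfolding outputs_def by simp

lemma sender_output:
  assumes "x \<in> senders y"
  shows "y \<in> outputs"
proof -
  have "0 < P x * W x y" using assms by (simp add: senders_def)
  also have "\<dots> \<le> WP y" by (rule joint_le_outdist[OF P_nonneg])
  finally show ?thesis unfolding outputs_def by simp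
qed

lemma senders_nonempty: "y \<in> outputs \<Longrightarrow> senders y \<noteq> {}"
  using WP_senders[of y] unfolding outputs_def by auto

lemma outputs_nonempty: "outputs \<noteq> {}"
proof
  assume "outputs = {}"
  then have "WP y = 0" for y using WP_nonneg[of y] unfolding outputs_def by (auto simp: order_less_le)
  then show False using WP_sum by simp
qed

lemma W_outside_outputs: "0 < P a \<Longrightarrow> y \<notin> outputs \<Longrightarrow> W a y = 0"
  using sender_output[of a y] W_nonneg[of a y] unfolding senders_def by force

lemma sum_over_outputs: "0 < P a \<Longrightarrow> (\<Sum>y\<in>outputs. W a y * F y) = (\<Sum>y\<in>UNIV. W a y * F y)"
  by (rule sum.mono_neutral_left) (auto simp: W_outside_outputs)

subsection \<open>The Gallager function as a nested log-sum-exp\<close>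

text \<open>inner_log y u = ln (SUM_x P x * W x y powr u), with its first two u-derivatives;
  outer y s = (1+s) * inner_log y (1/(1+s)) is the log of the y-th summand of the
  Gallager sum, again with two s-derivatives; psi is the log of the sum of exp (outer y s).\<close>

definition inner_log :: "'y \<Rightarrow> real \<Rightarrow> real" where
  "inner_log y u = ln (expsum (senders y) P (\<lambda>x. u * ln (W x y)))"

definition inner_mean :: "'y \<Rightarrow> real \<Rightarrow> real" where
  "inner_mean y u = tilted_mean (senders y) P (\<lambda>x. u * ln (W x y)) (\<lambda>x. ln (W x y))"

definition inner_curv :: "'y \<Rightarrow> real \<Rightarrow> real" where
  "inner_curv y u = tilted_curv (senders y) P (\<lambda>x. u * ln (W x y)) (\<lambda>x. ln (W x y)) (\<lambda>x. 0)"

definition outer :: "'y \<Rightarrow> real \<Rightarrow> real" where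
  "outer y s = (1 + s) * inner_log y (1 / (1 + s))"

definition outer1 :: "'y \<Rightarrow> real \<Rightarrow> real" where
  "outer1 y s = inner_log y (1 / (1 + s)) - inner_mean y (1 / (1 + s)) / (1 + s)"

definition outer2 :: "'y \<Rightarrow> real \<Rightarrow> real" where
  "outer2 y s = inner_curv y (1 / (1 + s)) / (1 + s) ^ 3"

definition psi :: "real \<Rightarrow> real" where
  "psi s = ln (expsum outputs (\<lambda>_. 1) (\<lambda>y. outer y s))"

definition psi1 :: "real \<Rightarrow> real" where
  "psi1 s = tilted_mean outputs (\<lambda>_. 1) (\<lambda>y. outer y s) (\<lambda>y. outer1 y s)"

definition psi2 :: "real \<Rightarrow> real" where
  "psi2 s = tilted_curv outputs (\<lambda>_. 1) (\<lambda>y. outer y s) (\<lambda>y. outer1 y s) (\<lambda>y. outer2 y s)"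

lemma expsum_senders_pos: "y \<in> outputs \<Longrightarrow> 0 < expsum (senders y) P (\<lambda>x. u * ln (W x y))"
  by (rule expsum_pos) (auto simp: senders_nonempty P_senders)

lemma powr_sum_eq_expsum: "(\<Sum>x\<in>UNIV. P x * W x y powr u) = expsum (senders y) P (\<lambda>x. u * ln (W x y))"
proof -
  have "(\<Sum>x\<in>UNIV. P x * W x y powr u) = (\<Sum>x\<in>senders y. P x * W x y powr u)"
    by (rule sum.mono_neutral_right) (auto dest: joint_outside_senders)
  also have "\<dots> = expsum (senders y) P (\<lambda>x. u * ln (W x y))"
    unfolding expsum_def by (rule sum.cong) (auto simp: powr_def dest: W_senders)
  finally show ?thesis .
qed

lemma gallager_eq_psi:
  assumes s: "-1 < s"
  shows "gallager P W s = psi s"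
proof -
  have "(\<Sum>y\<in>UNIV. (\<Sum>x\<in>UNIV. P x * W x y powr (1 / (1 + s))) powr (1 + s))
      = (\<Sum>y\<in>outputs. (\<Sum>x\<in>UNIV. P x * W x y powr (1 / (1 + s))) powr (1 + s))"
  proof (rule sum.mono_neutral_right)
    show "\<forall>y\<in>UNIV - outputs. (\<Sum>x\<in>UNIV. P x * W x y powr (1 / (1 + s))) powr (1 + s) = 0"
    proof
      fix y assume "y \<in> UNIV - outputs"
      then have "senders y = {}" using sender_output by blast
      then show "(\<Sum>x\<in>UNIV. P x * W x y powr (1 / (1 + s))) powr (1 + s) = 0"
        unfolding powr_sum_eq_expsum expsum_def by simp
    qed
  qed auto
  also have "\<dots> = expsum outputs (\<lambda>_. 1) (\<lambda>y. outer y s)"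
    unfolding expsum_def
  proof (rule sum.cong)
    fix y assume "y \<in> outputs"
    then show "(\<Sum>x\<in>UNIV. P x * W x y powr (1 / (1 + s))) powr (1 + s) = 1 * exp (outer y s)"
      using expsum_senders_pos[of y "1 / (1 + s)"]
      unfolding powr_sum_eq_expsum outer_def inner_log_def by (simp add: powr_def mult.commute)
  qed auto
  finally show ?thesis unfolding gallager_def psi_def by simp
qed

lemma DERIV_inner_log: "y \<in> outputs \<Longrightarrow> (inner_log y has_real_derivative inner_mean y u) (at u)"
  unfolding inner_log_def[abs_def] inner_mean_def
  by (rule DERIV_ln_expsum[of "senders y" P "\<lambda>x u. u * ln (W x y)" "\<lambda>x. ln (W x y)" u, simplified])
     (auto simp: senders_nonempty P_senders intro!: derivative_eq_intros)

lemma DERIV_inner_mean: "y \<in> outputs \<Longrightarrow> (inner_mean y has_real_derivative inner_curv y u) (at u)"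
  unfolding inner_mean_def[abs_def] inner_curv_def
  by (rule DERIV_tilted_mean[of "senders y" P "\<lambda>x u. u * ln (W x y)" "\<lambda>x u. ln (W x y)" u "\<lambda>x. 0",
        simplified])
     (auto simp: senders_nonempty P_senders intro!: derivative_eq_intros)

lemma inner_curv_nonneg: "y \<in> outputs \<Longrightarrow> 0 \<le> inner_curv y u"
  unfolding inner_curv_def by (rule tilted_curv_nonneg) (auto simp: senders_nonempty P_senders)

lemma DERIV_comp_inverse_shift:
  assumes "(g has_real_derivative D) (at (1 / (1 + s)))" and s: "-1 < s"
  shows "((\<lambda>s. g (1 / (1 + s))) has_real_derivative - D / (1 + s)\<^sup>2) (at s)"
proof -
  have "((\<lambda>s. 1 / (1 + s)) has_real_derivative - (1 / (1 + s)\<^sup>2)) (at s)"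
    using s by (auto intro!: derivative_eq_intros simp: power2_eq_square)
  from DERIV_chain2[OF assms(1) this] show ?thesis by simp
qed

lemma DERIV_outer:
  assumes y: "y \<in> outputs" and s: "-1 < s"
  shows "(outer y has_real_derivative outer1 y s) (at s)"
proof -
  have "((\<lambda>s. (1 + s) * inner_log y (1 / (1 + s))) has_real_derivative
      1 * inner_log y (1 / (1 + s)) + - inner_mean y (1 / (1 + s)) / (1 + s)\<^sup>2 * (1 + s)) (at s)"
    by (rule DERIV_mult[OF _ DERIV_comp_inverse_shift[OF DERIV_inner_log[OF y] s]])
       (auto intro!: derivative_eq_intros)
  moreover have "1 * inner_log y (1 / (1 + s)) + - inner_mean y (1 / (1 + s)) / (1 + s)\<^sup>2 * (1 + s)
      = outer1 y s"
    unfolding outer1_def using s by (simp add: power2_eq_square)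
  ultimately show ?thesis unfolding outer_def[abs_def] by simp
qed

lemma DERIV_outer1:
  assumes y: "y \<in> outputs" and s: "-1 < s"
  shows "(outer1 y has_real_derivative outer2 y s) (at s)"
proof -
  define u where "u = 1 / (1 + s)"
  have quot: "((\<lambda>s. inner_mean y (1 / (1 + s)) / (1 + s)) has_real_derivative
     ((- inner_curv y u / (1 + s)\<^sup>2) * (1 + s) - inner_mean y u * 1) / ((1 + s) * (1 + s))) (at s)"
    unfolding u_def
    by (rule DERIV_divide[OF DERIV_comp_inverse_shift[OF DERIV_inner_mean[OF y] s]])
       (use s in \<open>auto intro!: derivative_eq_intros\<close>)
  have "(outer1 y has_real_derivative
      - inner_mean y u / (1 + s)\<^sup>2
      - ((- inner_curv y u / (1 + s)\<^sup>2) * (1 + s) - inner_mean y u * 1) / ((1 + s) * (1 + s))) (at s)"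
    unfolding outer1_def[abs_def] u_def
    by (rule DERIV_diff[OF DERIV_comp_inverse_shift[OF DERIV_inner_log[OF y] s] quot[unfolded u_def]])
  moreover have "- inner_mean y u / (1 + s)\<^sup>2
      - ((- inner_curv y u / (1 + s)\<^sup>2) * (1 + s) - inner_mean y u * 1) / ((1 + s) * (1 + s))
      = outer2 y s"
  proof -
    have "- a / t\<^sup>2 - ((- c / t\<^sup>2) * t - a * 1) / (t * t) = c / t ^ 3" if "t \<noteq> 0" for a c t :: real
      using that by (simp add: field_simps power2_eq_square power3_eq_cube)
    moreover have "1 + s \<noteq> 0" using s by simp
    ultimately show ?thesis unfolding outer2_def u_def[symmetric] by blast
  qed
  ultimately show ?thesis by simp
qed

lemma outer2_nonneg: "y \<in> outputs \<Longrightarrow> -1 < s \<Longrightarrow> 0 \<le> outer2 y s"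
  unfolding outer2_def using inner_curv_nonneg by simp

lemma DERIV_psi: "-1 < s \<Longrightarrow> (psi has_real_derivative psi1 s) (at s)"
  unfolding psi_def[abs_def] psi1_def
  by (rule DERIV_ln_expsum[of outputs "\<lambda>_. 1" outer "\<lambda>y. outer1 y s" s])
     (auto simp: outputs_nonempty DERIV_outer)

lemma DERIV_psi1: "-1 < s \<Longrightarrow> (psi1 has_real_derivative psi2 s) (at s)"
  unfolding psi1_def[abs_def] psi2_def
  by (rule DERIV_tilted_mean[of outputs "\<lambda>_. 1" outer outer1 s "\<lambda>y. outer2 y s"])
     (auto simp: outputs_nonempty DERIV_outer DERIV_outer1)

lemma psi2_nonneg: "-1 < s \<Longrightarrow> 0 \<le> psi2 s"
  unfolding psi2_def by (rule tilted_curv_nonneg) (auto simp: outputs_nonempty outer2_nonneg)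

subsection \<open>Derivatives of the Gallager function at 0\<close>

definition joint_avg :: "('x \<Rightarrow> 'y \<Rightarrow> real) \<Rightarrow> real" where
  "joint_avg F = (\<Sum>x\<in>UNIV. P x * (\<Sum>y\<in>{y. 0 < W x y}. W x y * F x y))"

lemma joint_avg_by_outputs: "joint_avg F = (\<Sum>y\<in>outputs. \<Sum>x\<in>senders y. P x * W x y * F x y)"
proof -
  define G where "G x y = (if x \<in> senders y then P x * W x y * F x y else 0)" for x y
  have row: "P x * (\<Sum>y\<in>{y. 0 < W x y}. W x y * F x y) = (\<Sum>y\<in>UNIV. G x y)" for x
  proof (cases "0 < P x")
    case True
    have "P x * (\<Sum>y\<in>{y. 0 < W x y}. W x y * F x y) = (\<Sum>y\<in>{y\<in>UNIV. 0 < W x y}. P x * W x y * F x y)"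
      by (simp add: sum_distrib_left mult.assoc)
    also have "\<dots> = (\<Sum>y\<in>UNIV. if 0 < W x y then P x * W x y * F x y else 0)"
      by (rule sum.inter_filter) simp
    finally show ?thesis using True by (simp add: G_def senders_def)
  next
    case False
    then show ?thesis using P_nonneg[of x] by (simp add: G_def senders_def)
  qed
  have "joint_avg F = (\<Sum>y\<in>UNIV. \<Sum>x\<in>UNIV. G x y)"
    unfolding joint_avg_def row by (rule sum.swap)
  also have "\<dots> = (\<Sum>y\<in>outputs. \<Sum>x\<in>UNIV. G x y)"
    by (rule sum.mono_neutral_right) (auto simp: G_def dest: sender_output intro!: sum.neutral)
  also have "\<dots> = (\<Sum>y\<in>outputs. \<Sum>x\<in>senders y. P x * W x y * F x y)"
    unfolding G_def by (simp add: sum.inter_restrict[symmetric])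
  finally show ?thesis .
qed

lemma joint_avg_add: "joint_avg (\<lambda>x y. F x y + G x y) = joint_avg F + joint_avg G"
  unfolding joint_avg_def by (simp add: distrib_left sum.distrib)

lemma joint_avg_scale: "joint_avg (\<lambda>x y. c * F x y) = c * joint_avg F"
  unfolding joint_avg_def by (simp add: sum_distrib_left mult.left_commute)

lemma joint_avg_one: "joint_avg (\<lambda>x y. 1) = 1"
  unfolding joint_avg_def using sum_over_W_support[of _ "\<lambda>_. 1"] by (simp add: W_sum P_sum)

lemma joint_avg_centered_square:
  "joint_avg (\<lambda>x y. (F x y - c)\<^sup>2) = joint_avg (\<lambda>x y. (F x y)\<^sup>2) - 2 * c * joint_avg F + c\<^sup>2"
proof -
  have "joint_avg (\<lambda>x y. (F x y - c)\<^sup>2) = joint_avg (\<lambda>x y. (F x y)\<^sup>2 + ((- 2 * c) * F x y + c\<^sup>2 * 1))"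
    by (rule arg_cong[where f = joint_avg]) (simp add: fun_eq_iff power2_eq_square algebra_simps)
  also have "\<dots> = joint_avg (\<lambda>x y. (F x y)\<^sup>2) + (- 2 * c) * joint_avg F + c\<^sup>2 * joint_avg (\<lambda>x y. 1)"
    by (simp only: joint_avg_add joint_avg_scale add.assoc)
  finally show ?thesis by (simp add: joint_avg_one)
qed

lemma mutinf_joint_avg: "mutinf P W = joint_avg (\<lambda>x y. ln (W x y / WP y))"
  unfolding mutinf_def relent_def joint_avg_def by simp

lemma expsum_senders_one: "expsum (senders y) P (\<lambda>x. 1 * ln (W x y)) = WP y"
  unfolding expsum_def WP_senders by (rule sum.cong) (auto dest: W_senders)

lemma inner_log_one: "inner_log y 1 = ln (WP y)"
  unfolding inner_log_def expsum_senders_one ..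

lemma inner_mean_one: "inner_mean y 1 = (\<Sum>x\<in>senders y. P x * W x y * ln (W x y)) / WP y"
  unfolding inner_mean_def tilted_mean_def expsum_senders_one
  by (rule arg_cong[where f="\<lambda>z. z / WP y"], rule sum.cong) (auto dest: W_senders)

lemma inner_curv_one:
  "inner_curv y 1 = (\<Sum>x\<in>senders y. P x * W x y * (ln (W x y))\<^sup>2) / WP y - (inner_mean y 1)\<^sup>2"
proof -
  have "(\<Sum>x\<in>senders y. P x * exp (1 * ln (W x y)) * (0 + (ln (W x y))\<^sup>2))
      = (\<Sum>x\<in>senders y. P x * W x y * (ln (W x y))\<^sup>2)"
    by (rule sum.cong) (auto dest: W_senders)
  then show ?thesis
    unfolding inner_curv_def tilted_curv_def inner_mean_def[symmetric] expsum_senders_one by simp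
qed

lemma expsum_outer_zero: "expsum outputs (\<lambda>_. 1) (\<lambda>y. outer y 0) = 1"
proof -
  have "expsum outputs (\<lambda>_. 1) (\<lambda>y. outer y 0) = (\<Sum>y\<in>outputs. WP y)"
    unfolding expsum_def by (rule sum.cong) (auto simp: outer_def inner_log_one WP_pos)
  also have "\<dots> = (\<Sum>y\<in>UNIV. WP y)"
    by (rule sum.mono_neutral_left) (auto simp: outputs_def order_less_le WP_nonneg)
  finally show ?thesis unfolding WP_sum .
qed

lemma psi_zero: "psi 0 = 0"
  unfolding psi_def expsum_outer_zero by simp

lemma info_density_split:
  assumes "x \<in> senders y"
  shows "ln (W x y / WP y) = ln (W x y) - ln (WP y)"
  using W_senders[OF assms] WP_pos[OF sender_output[OF assms]] by (rule ln_divide_pos)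

lemma info_density_sum:
  assumes y: "y \<in> outputs"
  shows "(\<Sum>x\<in>senders y. P x * W x y * ln (W x y / WP y)) = WP y * inner_mean y 1 - WP y * ln (WP y)"
proof -
  have "(\<Sum>x\<in>senders y. P x * W x y * ln (W x y / WP y))
      = (\<Sum>x\<in>senders y. P x * W x y * ln (W x y)) - ln (WP y) * (\<Sum>x\<in>senders y. P x * W x y)"
    by (simp add: info_density_split algebra_simps sum_subtractf sum_distrib_left)
  then show ?thesis
    unfolding inner_mean_one WP_senders[symmetric] using WP_pos[OF y] by simp
qed

lemma info_density_square_sum:
  assumes y: "y \<in> outputs"
  shows "(\<Sum>x\<in>senders y. P x * W x y * (ln (W x y / WP y))\<^sup>2)
       = WP y * (inner_curv y 1 + (ln (WP y) - inner_mean y 1)\<^sup>2)"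
proof -
  define B where "B = (\<Sum>x\<in>senders y. P x * W x y * ln (W x y))"
  define B2 where "B2 = (\<Sum>x\<in>senders y. P x * W x y * (ln (W x y))\<^sup>2)"
  define lq where "lq = ln (WP y)"
  have "(\<Sum>x\<in>senders y. P x * W x y * (ln (W x y / WP y))\<^sup>2)
      = (\<Sum>x\<in>senders y. P x * W x y * (ln (W x y))\<^sup>2 - 2 * lq * (P x * W x y * ln (W x y))
           + lq\<^sup>2 * (P x * W x y))"
    by (intro sum.cong) (auto simp: info_density_split lq_def power2_eq_square algebra_simps)
  also have "\<dots> = B2 - 2 * lq * B + lq\<^sup>2 * WP y"
    unfolding B2_def B_def WP_senders by (simp add: sum.distrib sum_subtractf sum_distrib_left)
  also have "\<dots> = WP y * (inner_curv y 1 + (ln (WP y) - inner_mean y 1)\<^sup>2)"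
    unfolding inner_curv_one inner_mean_one B_def[symmetric] B2_def[symmetric] lq_def[symmetric]
    using WP_pos[OF y] by (simp add: field_simps power2_eq_square)
  finally show ?thesis .
qed

lemma psi1_zero: "psi1 0 = - mutinf P W"
proof -
  have "psi1 0 = (\<Sum>y\<in>outputs. 1 * exp (outer y 0) * outer1 y 0)"
    unfolding psi1_def tilted_mean_def expsum_outer_zero by simp
  also have "\<dots> = (\<Sum>y\<in>outputs. - (\<Sum>x\<in>senders y. P x * W x y * ln (W x y / WP y)))"
  proof (rule sum.cong)
    fix y assume y: "y \<in> outputs"
    show "1 * exp (outer y 0) * outer1 y 0 = - (\<Sum>x\<in>senders y. P x * W x y * ln (W x y / WP y))"
      using info_density_sum[OF y] WP_pos[OF y]
      by (simp add: outer_def outer1_def inner_log_one algebra_simps)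
  qed simp
  also have "\<dots> = - mutinf P W"
    unfolding mutinf_joint_avg joint_avg_by_outputs by (simp add: sum_negf)
  finally show ?thesis .
qed

lemma psi2_zero: "psi2 0 = joint_avg (\<lambda>x y. (ln (W x y / WP y))\<^sup>2) - (mutinf P W)\<^sup>2"
proof -
  have "psi2 0 = (\<Sum>y\<in>outputs. 1 * exp (outer y 0) * (outer2 y 0 + (outer1 y 0)\<^sup>2)) - (psi1 0)\<^sup>2"
    unfolding psi2_def tilted_curv_def expsum_outer_zero psi1_def by simp
  also have "(\<Sum>y\<in>outputs. 1 * exp (outer y 0) * (outer2 y 0 + (outer1 y 0)\<^sup>2))
      = joint_avg (\<lambda>x y. (ln (W x y / WP y))\<^sup>2)"
    unfolding joint_avg_by_outputs
    by (rule sum.cong) (auto simp: info_density_square_sum WP_pos outer_def outer1_def outer2_def inner_log_one)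
  finally show ?thesis unfolding psi1_zero by simp
qed

subsection \<open>Karush-Kuhn-Tucker conditions for a capacity-achieving input\<close>

lemma relent_by_outputs:
  assumes a: "0 < P a"
  shows "relent (W a) WP = negent a - (\<Sum>y\<in>outputs. W a y * ln (WP y))"
proof -
  have "relent (W a) WP = (\<Sum>y\<in>{y. 0 < W a y}. W a y * (ln (W a y) - ln (WP y)))"
    unfolding relent_def
  proof (rule sum.cong)
    fix y assume "y \<in> {y. 0 < W a y}"
    then have "a \<in> senders y" using a unfolding senders_def by simp
    then show "W a y * ln (W a y / WP y) = W a y * (ln (W a y) - ln (WP y))"
      by (simp add: info_density_split)
  qed simp
  also have "\<dots> = negent a - (\<Sum>y\<in>UNIV. W a y * ln (WP y))"
    unfolding negent_def sum_over_W_support[symmetric] by (simp add: algebra_simps sum_subtractf)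
  finally show ?thesis unfolding sum_over_outputs[OF a] .
qed

definition shift :: "'x \<Rightarrow> 'x \<Rightarrow> real \<Rightarrow> 'x \<Rightarrow> real" where
  "shift a b l x = P x + l * ((if x = a then 1 else 0) - (if x = b then 1 else 0))"

lemma sum_shift: "(\<Sum>x\<in>UNIV. shift a b l x * g x) = (\<Sum>x\<in>UNIV. P x * g x) + l * (g a - g b)"
proof -
  have "(\<Sum>x\<in>UNIV. shift a b l x * g x) = (\<Sum>x\<in>UNIV. P x * g x + l * (if x = a then g x else 0)
      - l * (if x = b then g x else 0))"
    unfolding shift_def by (rule sum.cong) (auto simp: algebra_simps)
  also have "\<dots> = (\<Sum>x\<in>UNIV. P x * g x) + l * (\<Sum>x\<in>UNIV. if x = a then g x else 0)
      - l * (\<Sum>x\<in>UNIV. if x = b then g x else 0)"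
    by (simp only: sum.distrib sum_subtractf sum_distrib_left)
  finally show ?thesis by (simp add: algebra_simps)
qed

lemma shift_input_distr:
  assumes "\<bar>l\<bar> < min (P a) (P b)"
  shows "input_distr (shift a b l)"
proof -
  have "0 \<le> shift a b l x" for x
    using assms P_nonneg[of x] unfolding shift_def by (auto split: if_splits)
  moreover have "(\<Sum>x\<in>UNIV. shift a b l x) = 1"
    using sum_shift[of a b l "\<lambda>_. 1"] P_sum by simp
  ultimately show ?thesis unfolding input_distr_def by simp
qed

definition shifted_info :: "'x \<Rightarrow> 'x \<Rightarrow> real \<Rightarrow> real" where
  "shifted_info a b l = (\<Sum>x\<in>UNIV. P x * negent x) + l * (negent a - negent b)
     - (\<Sum>y\<in>outputs. (WP y + l * (W a y - W b y)) * ln (WP y + l * (W a y - W b y)))"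

lemma mutinf_shift:
  assumes a: "0 < P a" and b: "0 < P b" and l: "\<bar>l\<bar> < min (P a) (P b)"
  shows "mutinf (shift a b l) W = shifted_info a b l"
proof -
  have out: "outdist (shift a b l) W y = WP y + l * (W a y - W b y)" for y
    unfolding outdist_def sum_shift ..
  have "(\<Sum>y\<in>UNIV. outdist (shift a b l) W y * ln (outdist (shift a b l) W y))
      = (\<Sum>y\<in>outputs. (WP y + l * (W a y - W b y)) * ln (WP y + l * (W a y - W b y)))"
    unfolding out
  proof (rule sum.mono_neutral_right)
    show "\<forall>y\<in>UNIV - outputs. (WP y + l * (W a y - W b y)) * ln (WP y + l * (W a y - W b y)) = 0"
    proof
      fix y assume y: "y \<in> UNIV - outputs"
      then have "WP y = 0" using WP_nonneg[of y] unfolding outputs_def by (auto simp: order_less_le)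
      then show "(WP y + l * (W a y - W b y)) * ln (WP y + l * (W a y - W b y)) = 0"
        using y W_outside_outputs[OF a] W_outside_outputs[OF b] by simp
    qed
  qed auto
  moreover have "0 \<le> shift a b l x" for x
    using shift_input_distr[OF l] unfolding input_distr_def by simp
  ultimately show ?thesis
    using mutinf_entropy_form[of "shift a b l"] by (simp add: sum_shift shifted_info_def)
qed

lemma DERIV_shifted_info:
  "(shifted_info a b has_real_derivative
     (negent a - negent b) - (\<Sum>y\<in>outputs. (W a y - W b y) * ln (WP y) + (W a y - W b y))) (at 0)"
proof -
  have "((\<lambda>l. (WP y + l * d) * ln (WP y + l * d)) has_real_derivative d * ln (WP y) + d) (at 0)"
    if y: "y \<in> outputs" for y d
  proof -
    have pos: "0 < WP y" using WP_pos[OF y] .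
    show ?thesis by (rule derivative_eq_intros refl | use pos in simp)+
  qed
  then show ?thesis unfolding shifted_info_def[abs_def]
    by (intro derivative_eq_intros DERIV_sum) (auto dest: WP_pos)
qed

text \<open>If P maximises I(., W), then D(W_a || W_P) = D(W_b || W_P) for all inputs a, b
  in the support of P: the shift is a feasible direction in both signs, so the
  derivative of the mutual information along it vanishes.\<close>

lemma kkt_pair:
  assumes cap: "mutinf P W = capacity W" and a: "0 < P a" and b: "0 < P b"
  shows "relent (W a) WP = relent (W b) WP"
proof -
  define \<delta> where "\<delta> = min (P a) (P b)"
  have \<delta>: "0 < \<delta>" using a b unfolding \<delta>_def by simp
  have "shift a b 0 = P" unfolding shift_def by auto
  then have at0: "shifted_info a b 0 = capacity W"
    using mutinf_shift[OF a b, of 0] \<delta> cap unfolding \<delta>_def by simp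
  have "\<forall>l. \<bar>0 - l\<bar> < \<delta> \<longrightarrow> shifted_info a b l \<le> shifted_info a b 0"
  proof (intro allI impI)
    fix l :: real assume "\<bar>0 - l\<bar> < \<delta>"
    then have l: "\<bar>l\<bar> < min (P a) (P b)" unfolding \<delta>_def by simp
    have "shifted_info a b l = mutinf (shift a b l) W" using mutinf_shift[OF a b l] by simp
    also have "\<dots> \<le> capacity W" by (rule mutinf_le_capacity[OF shift_input_distr[OF l]])
    finally show "shifted_info a b l \<le> shifted_info a b 0" using at0 by simp
  qed
  from DERIV_local_max[OF DERIV_shifted_info \<delta> this]
  have "negent a - negent b = (\<Sum>y\<in>outputs. W a y * ln (WP y)) - (\<Sum>y\<in>outputs. W b y * ln (WP y))
       + ((\<Sum>y\<in>outputs. W a y) - (\<Sum>y\<in>outputs. W b y))"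
    by (simp add: algebra_simps sum.distrib sum_subtractf)
  moreover have "(\<Sum>y\<in>outputs. W x y) = 1" if "0 < P x" for x
    using sum_over_outputs[OF that, of "\<lambda>_. 1"] W_sum by simp
  ultimately show ?thesis unfolding relent_by_outputs[OF a] relent_by_outputs[OF b] using a b by simp
qed

lemma kkt:
  assumes cap: "mutinf P W = capacity W" and a: "0 < P a"
  shows "relent (W a) WP = mutinf P W"
proof -
  have "mutinf P W = (\<Sum>x\<in>UNIV. P x * relent (W a) WP)"
    unfolding mutinf_def
    by (rule sum.cong) (use P_nonneg kkt_pair[OF cap _ a] in \<open>force simp: order_less_le\<close>)+
  also have "\<dots> = relent (W a) WP" using P_sum by (simp add: sum_distrib_right[symmetric])
  finally show ?thesis by simp
qed

lemma dispersion_eq_psi2: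
  assumes cap: "mutinf P W = capacity W"
  shows "dispersion P W = psi2 0"
proof -
  have "dispersion P W = joint_avg (\<lambda>x y. (ln (W x y / WP y) - mutinf P W)\<^sup>2)"
    unfolding dispersion_def joint_avg_def
    by (rule sum.cong) (use P_nonneg kkt[OF cap] in \<open>force simp: order_less_le\<close>)+
  also have "\<dots> = psi2 0"
    unfolding joint_avg_centered_square mutinf_joint_avg[symmetric] psi2_zero
    by (simp add: power2_eq_square)
  finally show ?thesis .
qed

end

theorem mainTheorem12:
  fixes W :: "'x::finite \<Rightarrow> 'y::finite \<Rightarrow> real" and P :: "'x \<Rightarrow> real" and R2 :: real
  assumes "channel W" and "input_distr P"
    and "mutinf P W = capacity W"
    and "dispersion P W > 0"
    and "R2 < 0"
  shows "(\<lambda>n::nat. real n * (INF s\<in>{0..1::real}.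
            capacity W * s + R2 / sqrt (real n) * s + gallager P W s))
         \<longlonglongrightarrow> - (R2\<^sup>2 / (2 * dispersion P W))"
proof -
  interpret dmc_input W P using assms(1,2) by unfold_locales
  define f where "f s = capacity W * s + gallager P W s" for s
  have df: "(f has_real_derivative capacity W + psi1 s) (at s)" if "0 \<le> s" for s
  proof -
    have "(gallager P W has_real_derivative psi1 s) (at s)"
      by (rule has_field_derivative_transform_within_open[OF DERIV_psi, of s "{-1<..}"])
         (use that gallager_eq_psi in auto)
    then show ?thesis unfolding f_def[abs_def] by (auto intro!: derivative_eq_intros)
  qed
  have df1: "((\<lambda>s. capacity W + psi1 s) has_real_derivative psi2 s) (at s)" if "0 \<le> s" for s
    using DERIV_psi1[of s] that by (auto intro!: derivative_eq_intros)
  have "(\<lambda>n. real n * (INF s\<in>{0..1}. f s + R2 / sqrt (real n) * s)) \<longlonglongrightarrow> - (R2\<^sup>2 / (2 * psi2 0))"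
  proof (rule scaled_inf_limit[OF _ _ df df1 _ refl])
    show "f 0 = 0" using gallager_eq_psi[of 0] psi_zero by (simp add: f_def)
    show "capacity W + psi1 0 = 0" using psi1_zero assms(3) by simp
    show "0 < psi2 0" using dispersion_eq_psi2[OF assms(3)] assms(4) by simp
  qed (use assms(5) psi2_nonneg in auto)
  then show ?thesis unfolding f_def dispersion_eq_psi2[OF assms(3)] by (simp add: ac_simps)
qed

end
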